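(* Let $U$ be a countably infinite universe, $\mathcal{C}=(L_1,L_2,\ldots)$ a countably infinite collection of languages over $U$, and let $m^\star_n(L_j)$ be computed by the Noisy Procedure in the context. Suppose that for every $t\in\mathbb{N}$ the set $\{(n',j): m^\star_{n'}(L_j)+1\le t\}$ is finite. Then there exists an algorithm that noisily non-uniformly generates from $\mathcal{C}$ with generation times forming a Pareto-optimal family.
   Context: A language is an infinite subset of $U$; a collection is a sequence of languages (repetitions allowed, entries distinguished by index). For a language $L$ and integer $n\ge0$, an enumeration of $L$ at noise level $n$ is a sequence $x_1,x_2,\ldots$ of elements of $U$ such that every $x\in L$ equals some $x_t$ and $\sum_{t\ge1}\mathbf{1}[x_t\notin L]\le n$. A generating algorithm at each time $t\ge1$ receives $x_1,\ldots,x_t$ and outputs $z_t\in U$; $S_t$ is the set of distinct strings among $x_1,\ldots,x_t$. For a set $T$, language $L$ and integer $a\ge0$, $T$ is $a$-contained in $L$ if $\sum_{x\in T}\mathbf{1}[x\notin L]\le a$. An algorithm noisily non-uniformly generates from $\mathcal{C}$ with (finite) generation times $t_n(L_i)$ if for all $n\ge0$, $i\ge1$ and every enumeration of $L_i$ at noise level $n$, $z_t\in L_i\setminus S_t$ whenever $|S_t|\ge t_n(L_i)$; for an algorithm $\mathcal{G}$, $t_{n,\mathcal{G}}(L_i)$ is the least such value ($\infty$ if none). A family $(t_n(L_i))_{n\ge0,i\ge1}$ is Pareto-optimal if every algorithm $\mathcal{G}$ that noisily non-uniformly generates from $\mathcal{C}$ and satisfies $t_{n,\mathcal{G}}(L_i)<t_n(L_i)$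 for some pair $(n,i)$ also satisfies $t_{n',\mathcal{G}}(L_j)>t_{n'}(L_j)$ for some other pair $(n',j)$. Diagonal order: pairs $(n,i)$ ordered as $(0,1),(1,1),(0,2),(2,1),(1,2),(0,3),\ldots$, i.e. for $n'=0,1,2,\ldots$ and $h=0,\ldots,n'$ the pair $(n'-h,h+1)$. Each pair $(a,b)$ has an entry $L_{a,b}$, a copy of $L_b$ labelled $(a,b)$. Noisy Procedure. Set $\mathcal{C}'_0=()$. For $l=1,2,\ldots$, let $(n,i)$ be the $l$-th pair; append $L_{n,i}$ to the end of $\mathcal{C}'_{l-1}$ to get $\mathcal{C}'_l=(L'_1,\ldots,L'_l)$, set $j=l$. Repeat: (A) let $T$ be a finite subset of $U$ of largest size for which there is a subcollection $\mathcal{D}$ of the entries $(L'_1,\ldots,L'_j)$ including $L'_j$, such that $T$ is $a$-contained in $L_b$ for every entry $L_{a,b}\in\mathcal{D}$ and $\bigcap_{L_{a,b}\in\mathcal{D}}L_b$ is finite; $m_{\mathrm{chk}}=|T|$ ($0$ if no such $\mathcal{D}$ exists). (B) If $j\le1$ or $m_{\mathrm{chk}}>m^\star_a(L_b)$ where $L'_{j-1}=L_{a,b}$, stop. (C) Otherwise swap positions $j-1$, $j$, set $j\leftarrow j-1$, return to (A). On stopping, set $m^\star_n(L_i)=m_{\mathrm{chk}}$. *)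

theory Defs
  imports Main "HOL-Library.Extended_Nat" "HOL-Library.Countable_Set"
begin

(* Collections are sequences L :: nat => 'u set; only indices i >= 1 are used.
   Enumerations are x :: nat => 'u with x_t = x (t - 1). *)

definition enumeration :: "'u set \<Rightarrow> nat \<Rightarrow> (nat \<Rightarrow> 'u) \<Rightarrow> bool" where
  "enumeration K n x \<longleftrightarrow>
     K \<subseteq> range x \<and> finite {t. x t \<notin> K} \<and> card {t. x t \<notin> K} \<le> n"

definition gen_ok :: "('u list \<Rightarrow> 'u) \<Rightarrow> 'u set \<Rightarrow> nat \<Rightarrow> nat \<Rightarrow> bool" where
  "gen_ok G K n k \<longleftrightarrow>
     (\<forall>x. enumeration K n x \<longrightarrow>
        (\<forall>t\<ge>1. card (x ` {..<t}) \<ge> k \<longrightarrow> G (map x [0..<t]) \<in> K - x ` {..<t}))"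

definition gen_time :: "('u list \<Rightarrow> 'u) \<Rightarrow> (nat \<Rightarrow> 'u set) \<Rightarrow> nat \<Rightarrow> nat \<Rightarrow> enat" where
  "gen_time G L n i =
     (if \<exists>k. gen_ok G (L i) n k then enat (LEAST k. gen_ok G (L i) n k) else \<infinity>)"

definition noisy_generates :: "(nat \<Rightarrow> 'u set) \<Rightarrow> ('u list \<Rightarrow> 'u) \<Rightarrow> bool" where
  "noisy_generates L G \<longleftrightarrow> (\<forall>n i. i \<ge> 1 \<longrightarrow> gen_time G L n i \<noteq> \<infinity>)"

definition generates_with :: "(nat \<Rightarrow> 'u set) \<Rightarrow> ('u list \<Rightarrow> 'u) \<Rightarrow> (nat \<Rightarrow> nat \<Rightarrow> nat) \<Rightarrow> bool" where
  "generates_with L G tm \<longleftrightarrow> (\<forall>n i. i \<ge> 1 \<longrightarrow> gen_ok G (L i) n (tm n i))"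

definition pareto_optimal :: "(nat \<Rightarrow> 'u set) \<Rightarrow> (nat \<Rightarrow> nat \<Rightarrow> nat) \<Rightarrow> bool" where
  "pareto_optimal L tm \<longleftrightarrow>
     (\<forall>(G :: 'u list \<Rightarrow> 'u) n i. noisy_generates L G \<and> i \<ge> 1 \<and> gen_time G L n i < enat (tm n i) \<longrightarrow>
        (\<exists>n' j. j \<ge> 1 \<and> (n', j) \<noteq> (n, i) \<and> gen_time G L n' j > enat (tm n' j)))"

(* Diagonal order: (0,1),(1,1),(0,2),(2,1),(1,2),(0,3),...; diag k is the (k+1)-th pair *)
definition diag_list :: "nat \<Rightarrow> (nat \<times> nat) list" where
  "diag_list N = concat (map (\<lambda>n'. map (\<lambda>h. (n' - h, h + 1)) [0..<Suc n']) [0..<N])"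

definition diag :: "nat \<Rightarrow> nat \<times> nat" where
  "diag k = diag_list (Suc k) ! k"

(* m_chk for the prefix xs = (L'_1,...,L'_j) of entries (a,b) standing for L_{a,b};
   subcollections D are sets of positions containing the last position j *)
definition mchk :: "(nat \<Rightarrow> 'u set) \<Rightarrow> (nat \<times> nat) list \<Rightarrow> nat" where
  "mchk L xs = Max ({card T | T D. finite T \<and> D \<subseteq> {..<length xs} \<and> length xs - 1 \<in> D \<and>
        (\<forall>k\<in>D. card (T - L (snd (xs ! k))) \<le> fst (xs ! k)) \<and>
        finite (\<Inter>k\<in>D. L (snd (xs ! k)))} \<union> {0})"

(* bubble L ms rys p zs: the new entry p sits right after the entries (rev rys)
   and is followed by zs; ms holds the already computed values m*. *)
fun bubble :: "(nat \<Rightarrow> 'u set) \<Rightarrow> (nat \<times> nat \<Rightarrow> nat) \<Rightarrow> (nat \<times> nat) list \<Rightarrow> nat \<times> nat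
                 \<Rightarrow> (nat \<times> nat) list \<Rightarrow> (nat \<times> nat) list \<times> nat" where
  "bubble L ms [] p zs = (p # zs, mchk L [p])"
| "bubble L ms (q # rys) p zs =
     (let c = mchk L (rev (q # rys) @ [p]) in
      if c > ms q then (rev (q # rys) @ p # zs, c)
      else bubble L ms rys p (q # zs))"

(* state after l rounds: (C'_l, m* values computed so far) *)
fun noisy_proc :: "(nat \<Rightarrow> 'u set) \<Rightarrow> nat \<Rightarrow> (nat \<times> nat) list \<times> (nat \<times> nat \<Rightarrow> nat)" where
  "noisy_proc L 0 = ([], (\<lambda>_. 0))"
| "noisy_proc L (Suc l) =
     (let (xs, ms) = noisy_proc L l; p = diag l; (xs', c) = bubble L ms (rev xs) p [] in
      (xs', ms(p := c)))"

definition mstar :: "(nat \<Rightarrow> 'u set) \<Rightarrow> nat \<Rightarrow> nat \<Rightarrow> nat" where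
  "mstar L n i = snd (noisy_proc L (Suc (LEAST l. diag l = (n, i)))) (n, i)"

end

theory Submission
  imports Defs
begin

(* The procedure keeps its entries sorted by m*, and every entry bounds by its m* the size of each
   candidate set T whose subcollection D consists of that entry and entries placed before it.
   Hence for every candidate (T, D) some entry of D has m* >= |T|.
   The generator outputs an unseen string lying in every L_j for which at most n' of the strings
   seen lie outside L_j and the time m*_{n'}(L_j) + 1 has been reached; if there were no such
   string, the strings seen would form a candidate T larger than the m* of all these entries.
   Conversely, m*_n(L_i) > 0 is attained by a maximal candidate (T, D) containing L_{n,i} whose
   other entries have smaller m*. An algorithm that beats the time at (n, i) and keeps all other
   times must, after seeing T, output a string in every language of D outside T, which is
   impossible because the intersection of these languages lies in T. *)

lemma sorted_wrt_le_last:
  fixes f :: "'a \<Rightarrow> 'b :: preorder"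
  shows "sorted_wrt (\<lambda>a b. f a \<le> f b) xs \<Longrightarrow> x \<in> set xs \<Longrightarrow> f x \<le> f (last xs)"
  by (induction xs) (auto simp: last_in_set)

lemma append_Cons_eq_append_Cons_cases:
  assumes "ys @ y # zs = A @ e # B"
  obtains (left) us where "A = ys @ y # us" "zs = us @ e # B"
    | (middle) "ys = A" "y = e" "zs = B"
    | (right) us where "ys = A @ e # us" "B = us @ y # zs"
  using assms by (auto simp: append_eq_append_conv2 Cons_eq_append_conv append_eq_Cons_conv)

section \<open>The diagonal order\<close>

lemma diag_list_Suc: "diag_list (Suc N) = diag_list N @ map (\<lambda>h. (N - h, h + 1)) [0..<Suc N]"
  by (simp add: diag_list_def)

lemma length_diag_list_ge: "N \<le> length (diag_list N)"
  by (induction N) (auto simp: diag_list_Suc)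

lemma diag_list_extend: "N \<le> M \<Longrightarrow> \<exists>ys. diag_list M = diag_list N @ ys"
  by (induction M rule: dec_induct) (auto simp: diag_list_Suc)

lemma set_diag_list: "set (diag_list N) = {(a, b). 1 \<le> b \<and> a + b \<le> N}"
proof (induction N)
  case (Suc N)
  have "set (map (\<lambda>h. (N - h, h + 1)) [0..<Suc N]) = {(a, b). 1 \<le> b \<and> a + b = Suc N}"
  proof (intro equalityI subsetI)
    fix p
    assume "p \<in> {(a, b). 1 \<le> b \<and> a + b = Suc N}"
    then show "p \<in> set (map (\<lambda>h. (N - h, h + 1)) [0..<Suc N])"
      by (auto intro!: image_eqI[where x = "snd p - 1"])
  qed auto
  then show ?case
    using Suc by (auto simp: diag_list_Suc)
qed (simp add: diag_list_def)

lemma distinct_diag_list: "distinct (diag_list N)"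
proof (induction N)
  case (Suc N)
  have "inj_on (\<lambda>h. (N - h, h + 1)) A" for A
    by (auto simp: inj_on_def)
  then show ?case
    using Suc by (auto simp: diag_list_Suc distinct_map set_diag_list)
qed (simp add: diag_list_def)

lemma diag_eq_nth: "k < length (diag_list N) \<Longrightarrow> diag k = diag_list N ! k"
proof -
  assume k: "k < length (diag_list N)"
  have "k < length (diag_list (Suc k))"
    using length_diag_list_ge[of "Suc k"] by simp
  moreover obtain ys zs where "diag_list (max N (Suc k)) = diag_list N @ ys"
    "diag_list (max N (Suc k)) = diag_list (Suc k) @ zs"
    using diag_list_extend by (metis max.cobounded1 max.cobounded2)
  ultimately show ?thesis
    using k by (metis diag_def nth_append_left)
qed

lemma inj_diag: "inj diag"
proof (rule injI)
  fix a b
  assume "diag a = diag b"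
  moreover have "a < length (diag_list (Suc (max a b)))" "b < length (diag_list (Suc (max a b)))"
    using length_diag_list_ge[of "Suc (max a b)"] by auto
  ultimately show "a = b"
    using diag_eq_nth distinct_diag_list nth_eq_iff_index_eq by metis
qed

lemma range_diag: "range diag = {p. 1 \<le> snd p}"
proof (intro equalityI subsetI)
  fix p
  assume "p \<in> range diag"
  then obtain l where "p = diag l" ..
  moreover have "l < length (diag_list (Suc l))"
    using length_diag_list_ge[of "Suc l"] by simp
  ultimately have "p \<in> set (diag_list (Suc l))"
    by (simp add: diag_eq_nth)
  then show "p \<in> {p. 1 \<le> snd p}"
    by (auto simp: set_diag_list)
next
  fix p :: "nat \<times> nat"
  assume "p \<in> {p. 1 \<le> snd p}"
  then have "p \<in> set (diag_list (fst p + snd p))"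
    by (auto simp: set_diag_list)
  then show "p \<in> range diag"
    by (metis diag_eq_nth in_set_conv_nth rangeI)
qed

section \<open>Candidates of step (A)\<close>

definition mchk_witness :: "(nat \<Rightarrow> 'u set) \<Rightarrow> 'u set \<Rightarrow> (nat \<times> nat) set \<Rightarrow> bool" where
  "mchk_witness L T D \<longleftrightarrow>
     finite T \<and> (\<forall>p\<in>D. card (T - L (snd p)) \<le> fst p) \<and> finite (\<Inter>p\<in>D. L (snd p))"

abbreviation witness_cards :: "(nat \<Rightarrow> 'u set) \<Rightarrow> (nat \<times> nat) set \<Rightarrow> nat \<times> nat \<Rightarrow> nat set" where
  "witness_cards L S p \<equiv> {card T | T D. D \<subseteq> S \<and> p \<in> D \<and> mchk_witness L T D}"

definition mchk_on :: "(nat \<Rightarrow> 'u set) \<Rightarrow> (nat \<times> nat) set \<Rightarrow> nat \<times> nat \<Rightarrow> nat" where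
  "mchk_on L S p = Max (witness_cards L S p \<union> {0})"

lemma card_mchk_witness_le:
  assumes "mchk_witness L T D" "finite D"
  shows "card T \<le> card (\<Inter>p\<in>D. L (snd p)) + (\<Sum>p\<in>D. fst p)"
proof -
  have fin: "finite T" "finite (\<Inter>p\<in>D. L (snd p))"
    using assms(1) by (auto simp: mchk_witness_def)
  have "card T \<le> card ((\<Inter>p\<in>D. L (snd p)) \<union> (\<Union>p\<in>D. T - L (snd p)))"
    using fin assms(2) by (intro card_mono) auto
  also have "\<dots> \<le> card (\<Inter>p\<in>D. L (snd p)) + card (\<Union>p\<in>D. T - L (snd p))"
    by (rule card_Un_le)
  also have "card (\<Union>p\<in>D. T - L (snd p)) \<le> (\<Sum>p\<in>D. card (T - L (snd p)))"
    using assms(2) by (rule card_UN_le)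
  also have "\<dots> \<le> (\<Sum>p\<in>D. fst p)"
    using assms(1) by (intro sum_mono) (auto simp: mchk_witness_def)
  finally show ?thesis by simp
qed

lemma finite_mchk_witness_cards:
  assumes "finite S"
  shows "finite (witness_cards L S p)"
proof -
  let ?bound = "(\<Sum>D\<in>Pow S. card (\<Inter>p\<in>D. L (snd p))) + (\<Sum>p\<in>S. fst p)"
  have "card T \<le> ?bound" if "D \<subseteq> S" "mchk_witness L T D" for T D
  proof -
    have "card (\<Inter>p\<in>D. L (snd p)) \<le> (\<Sum>D\<in>Pow S. card (\<Inter>p\<in>D. L (snd p)))"
      using assms that(1) by (intro member_le_sum) auto
    moreover have "(\<Sum>p\<in>D. fst p) \<le> (\<Sum>p\<in>S. fst p)"
      using assms that(1) by (intro sum_mono2) auto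
    ultimately show ?thesis
      using card_mchk_witness_le[OF that(2) finite_subset[OF that(1) assms]] by linarith
  qed
  then have "witness_cards L S p \<subseteq> {..?bound}"
    by auto
  then show ?thesis
    using finite_subset by blast
qed

lemma card_le_mchk_on:
  assumes "finite S" "D \<subseteq> S" "p \<in> D" "mchk_witness L T D"
  shows "card T \<le> mchk_on L S p"
proof -
  have "card T \<in> witness_cards L S p"
    using assms(2-4) by blast
  then show ?thesis
    unfolding mchk_on_def using finite_mchk_witness_cards[OF assms(1), where p = p and L = L]
    by (intro Max_ge) auto
qed

lemma mchk_on_mono:
  assumes "finite S'" "S \<subseteq> S'"
  shows "mchk_on L S p \<le> mchk_on L S' p"
proof -
  have "witness_cards L S p \<subseteq> witness_cards L S' p"
    using assms(2) by blast
  then show ?thesis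
    unfolding mchk_on_def using finite_mchk_witness_cards[OF assms(1), where p = p and L = L]
    by (intro Max_mono Un_mono order.refl) auto
qed

lemma mchk_witness_Un_Inter:
  assumes "mchk_witness L T D"
  shows "mchk_witness L (T \<union> (\<Inter>p\<in>D. L (snd p))) D"
proof -
  have "T \<union> (\<Inter>p\<in>D. L (snd p)) - L (snd q) = T - L (snd q)" if "q \<in> D" for q
    using that by blast
  then show ?thesis
    using assms by (simp add: mchk_witness_def)
qed

lemma mchk_on_maximal_witness:
  assumes "finite S" "0 < mchk_on L S p"
  obtains T D where "D \<subseteq> S" "p \<in> D" "mchk_witness L T D" "card T = mchk_on L S p"
    "(\<Inter>q\<in>D. L (snd q)) \<subseteq> T"
proof -
  have "mchk_on L S p \<in> witness_cards L S p \<union> {0}"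
    unfolding mchk_on_def using finite_mchk_witness_cards[OF assms(1), where p = p and L = L]
    by (intro Max_in) auto
  then have "mchk_on L S p \<in> witness_cards L S p"
    using assms(2) by simp
  then obtain T D where D: "D \<subseteq> S" "p \<in> D" and T: "mchk_witness L T D" "card T = mchk_on L S p"
    by (elim CollectE exE conjE) metis
  let ?T' = "T \<union> (\<Inter>q\<in>D. L (snd q))"
  have "finite ?T'"
    using mchk_witness_Un_Inter[OF T(1)] by (simp add: mchk_witness_def)
  moreover have "card ?T' \<le> card T"
    using card_le_mchk_on[OF assms(1) D mchk_witness_Un_Inter[OF T(1)]] T(2) by simp
  ultimately have "T = ?T'"
    by (intro card_seteq) auto
  then have "(\<Inter>q\<in>D. L (snd q)) \<subseteq> T"
    by (rule sup.orderI)
  then show thesis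
    by (rule that[OF D T])
qed

lemma mchk_on_insert_le:
  assumes "finite S"
  shows "mchk_on L (insert e S) p \<le> max (mchk_on L S p) (mchk_on L (insert e S) e)"
proof (cases "mchk_on L (insert e S) p = 0")
  case False
  have "finite (insert e S)" "0 < mchk_on L (insert e S) p"
    using assms False by auto
  then obtain T D where D: "D \<subseteq> insert e S" "p \<in> D" and T: "mchk_witness L T D"
    "card T = mchk_on L (insert e S) p"
    by (metis mchk_on_maximal_witness)
  show ?thesis
  proof (cases "e \<in> D")
    case True
    then show ?thesis
      using card_le_mchk_on[OF _ D(1) True T(1)] assms T(2) by simp
  next
    case False
    then show ?thesis
      using card_le_mchk_on[OF assms _ D(2) T(1)] D(1) T(2) by fastforce
  qed
qed simp

abbreviation position_cards :: "(nat \<Rightarrow> 'u set) \<Rightarrow> (nat \<times> nat) list \<Rightarrow> nat set" where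
  "position_cards L xs \<equiv> {card T | T K. finite T \<and> K \<subseteq> {..<length xs} \<and> length xs - 1 \<in> K \<and>
     (\<forall>k\<in>K. card (T - L (snd (xs ! k))) \<le> fst (xs ! k)) \<and> finite (\<Inter>k\<in>K. L (snd (xs ! k)))}"

lemma position_cards_subset:
  assumes "xs \<noteq> []"
  shows "position_cards L xs \<subseteq> witness_cards L (set xs) (last xs)"
proof
  fix c
  assume "c \<in> position_cards L xs"
  then obtain T K where T: "c = card T" "finite T" and K: "K \<subseteq> {..<length xs}" "length xs - 1 \<in> K"
    and contained: "\<forall>k\<in>K. card (T - L (snd (xs ! k))) \<le> fst (xs ! k)"
    and fin: "finite (\<Inter>k\<in>K. L (snd (xs ! k)))"
    by (elim CollectE exE conjE) metis
  have "(!) xs ` K \<subseteq> set xs" "last xs \<in> (!) xs ` K"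
    using K assms by (auto simp: last_conv_nth)
  moreover have "mchk_witness L T ((!) xs ` K)"
    using T(2) contained fin by (simp add: mchk_witness_def)
  ultimately show "c \<in> witness_cards L (set xs) (last xs)"
    using T(1) by (intro CollectI exI[of _ T] exI[of _ "(!) xs ` K"]) simp
qed

lemma witness_cards_subset:
  assumes "xs \<noteq> []"
  shows "witness_cards L (set xs) (last xs) \<subseteq> position_cards L xs"
proof
  fix c
  assume "c \<in> witness_cards L (set xs) (last xs)"
  then obtain T D where T: "c = card T" "D \<subseteq> set xs" "last xs \<in> D" "mchk_witness L T D"
    by (elim CollectE exE conjE) metis
  define K where "K = {k. k < length xs \<and> xs ! k \<in> D}"
  have "(!) xs ` K = D"
  proof
    show "D \<subseteq> (!) xs ` K"
    proof
      fix p
      assume "p \<in> D"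
      moreover obtain k where "k < length xs" "xs ! k = p"
        using T(2) \<open>p \<in> D\<close> by (metis in_set_conv_nth subsetD)
      ultimately show "p \<in> (!) xs ` K"
        by (auto simp: K_def)
    qed
  qed (auto simp: K_def)
  then have "(\<Inter>k\<in>K. L (snd (xs ! k))) = (\<Inter>p\<in>D. L (snd p))"
    by auto
  moreover have "K \<subseteq> {..<length xs}" "length xs - 1 \<in> K"
    using T(3) assms by (auto simp: K_def last_conv_nth)
  moreover have "\<forall>k\<in>K. card (T - L (snd (xs ! k))) \<le> fst (xs ! k)"
    using T(4) by (simp add: K_def mchk_witness_def)
  ultimately show "c \<in> position_cards L xs"
    using T(1,4) unfolding mchk_witness_def
    by (intro CollectI exI[of _ T] exI[of _ K] conjI) simp_all
qed

lemma mchk_eq_mchk_on: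
  assumes "xs \<noteq> []"
  shows "mchk L xs = mchk_on L (set xs) (last xs)"
proof -
  have "position_cards L xs = witness_cards L (set xs) (last xs)"
    using position_cards_subset[OF assms] witness_cards_subset[OF assms] by (rule subset_antisym)
  then show ?thesis
    by (simp add: mchk_def mchk_on_def)
qed

lemma mchk_append_mono: "mchk L (A @ [e]) \<le> mchk L (A @ C @ [e])"
  by (auto simp: mchk_eq_mchk_on intro: mchk_on_mono)

lemma mchk_insert_le: "mchk L (A @ e # C @ [b]) \<le> max (mchk L (A @ C @ [b])) (mchk L (A @ C @ [b, e]))"
proof -
  have "set (A @ e # C @ [b]) = insert e (set (A @ C @ [b]))" "set (A @ C @ [b, e]) = insert e (set (A @ C @ [b]))"
    by auto
  then show ?thesis
    using mchk_on_insert_le[of "set (A @ C @ [b])" L e b] by (simp add: mchk_eq_mchk_on)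
qed

section \<open>Invariants of the Noisy Procedure\<close>

lemma bubble_result:
  "bubble L ms rys p zs = (res, c) \<Longrightarrow>
     \<exists>A B. rev rys = A @ B \<and> res = A @ p # B @ zs \<and> c = mchk L (A @ [p]) \<and>
       (A \<noteq> [] \<longrightarrow> ms (last A) < c) \<and>
       (\<forall>C b C'. B = C @ b # C' \<longrightarrow> mchk L (A @ C @ [b, p]) \<le> ms b)"
proof (induction rys arbitrary: zs)
  case (Cons q rys)
  show ?case
  proof (cases "ms q < mchk L (rev (q # rys) @ [p])")
    case True
    have "res = rev (q # rys) @ p # zs" "c = mchk L (rev (q # rys) @ [p])"
      using True Cons.prems by (simp_all add: Let_def)
    show ?thesis
    proof (rule exI[of _ "rev (q # rys)"], rule exI[of _ "[]"])
    qed (use True \<open>res = _\<close> \<open>c = _\<close> in auto)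
  next
    case False
    then have "bubble L ms rys p (q # zs) = (res, c)"
      using Cons.prems by (simp add: Let_def)
    then obtain A B where AB: "rev rys = A @ B" "res = A @ p # B @ q # zs" "c = mchk L (A @ [p])"
      "A \<noteq> [] \<longrightarrow> ms (last A) < c" "\<forall>C b C'. B = C @ b # C' \<longrightarrow> mchk L (A @ C @ [b, p]) \<le> ms b"
      using Cons.IH by blast
    have "mchk L (A @ C @ [b, p]) \<le> ms b" if "B @ [q] = C @ b # C'" for C b C'
    proof (cases C' rule: rev_cases)
      case Nil
      then show ?thesis
        using that False AB(1) by simp
    next
      case (snoc C'' x)
      then have "B = C @ b # C''"
        using that by simp
      then show ?thesis
        using AB(5) by blast
    qed
    then show ?thesis
      using AB by (intro exI[of _ A] exI[of _ "B @ [q]"]) auto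
  qed
qed simp

definition collection_at :: "(nat \<Rightarrow> 'u set) \<Rightarrow> nat \<Rightarrow> (nat \<times> nat) list" where
  "collection_at L l = fst (noisy_proc L l)"

definition mvals_at :: "(nat \<Rightarrow> 'u set) \<Rightarrow> nat \<Rightarrow> nat \<times> nat \<Rightarrow> nat" where
  "mvals_at L l = snd (noisy_proc L l)"

abbreviation mstar_pair :: "(nat \<Rightarrow> 'u set) \<Rightarrow> nat \<times> nat \<Rightarrow> nat" where
  "mstar_pair L p \<equiv> mstar L (fst p) (snd p)"

lemma noisy_proc_step:
  obtains A B where "collection_at L l = A @ B" "collection_at L (Suc l) = A @ diag l # B"
    "mvals_at L (Suc l) = (mvals_at L l)(diag l := mchk L (A @ [diag l]))"
    "A \<noteq> [] \<Longrightarrow> mvals_at L l (last A) < mchk L (A @ [diag l])"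
    "\<And>C b C'. B = C @ b # C' \<Longrightarrow> mchk L (A @ C @ [b, diag l]) \<le> mvals_at L l b"
proof -
  obtain xs ms where np: "noisy_proc L l = (xs, ms)"
    by force
  obtain res c where rc: "bubble L ms (rev xs) (diag l) [] = (res, c)"
    by force
  have "noisy_proc L (Suc l) = (res, ms(diag l := c))"
    using np rc by simp
  then have cols: "collection_at L l = xs" "mvals_at L l = ms"
    "collection_at L (Suc l) = res" "mvals_at L (Suc l) = ms(diag l := c)"
    using np by (simp_all add: collection_at_def mvals_at_def)
  obtain A B where AB: "xs = A @ B" "res = A @ diag l # B" "c = mchk L (A @ [diag l])"
    "A \<noteq> [] \<longrightarrow> ms (last A) < c" "\<forall>C b C'. B = C @ b # C' \<longrightarrow> mchk L (A @ C @ [b, diag l]) \<le> ms b"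
    using bubble_result[OF rc] by auto
  show thesis
  proof (rule that[of A B])
    show "mchk L (A @ C @ [b, diag l]) \<le> mvals_at L l b" if "B = C @ b # C'" for C b C'
      using that AB(5) cols by blast
  qed (use cols AB in simp_all)
qed

lemma set_collection_at: "set (collection_at L l) = diag ` {..<l}"
proof (induction l)
  case (Suc l)
  obtain A B where "collection_at L l = A @ B" "collection_at L (Suc l) = A @ diag l # B"
    by (rule noisy_proc_step)
  then show ?case
    using Suc by (auto simp: lessThan_Suc)
qed (simp add: collection_at_def)

lemma mstar_pair_diag: "mstar_pair L (diag l) = mvals_at L (Suc l) (diag l)"
proof -
  have "(LEAST l'. diag l' = diag l) = l"
    by (rule Least_equality) (simp_all add: inj_diag inj_eq)
  then show ?thesis
    by (simp add: mstar_def mvals_at_def)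
qed

lemma mvals_at_eq_mstar: "p \<in> set (collection_at L l) \<Longrightarrow> mvals_at L l p = mstar_pair L p"
proof (induction l)
  case (Suc l)
  obtain A B where "collection_at L l = A @ B" "collection_at L (Suc l) = A @ diag l # B"
    "mvals_at L (Suc l) = (mvals_at L l)(diag l := mchk L (A @ [diag l]))"
    by (rule noisy_proc_step)
  then show ?case
    using Suc mstar_pair_diag[of L l] by (cases "p = diag l") auto
qed (simp add: collection_at_def)

lemma collection_at_Suc:
  obtains A B where "collection_at L l = A @ B" "collection_at L (Suc l) = A @ diag l # B"
    "mstar_pair L (diag l) = mchk L (A @ [diag l])"
    "A \<noteq> [] \<Longrightarrow> mstar_pair L (last A) < mstar_pair L (diag l)"
    "\<And>C b C'. B = C @ b # C' \<Longrightarrow> mchk L (A @ C @ [b, diag l]) \<le> mstar_pair L b"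
proof -
  obtain A B where step: "collection_at L l = A @ B" "collection_at L (Suc l) = A @ diag l # B"
    "mvals_at L (Suc l) = (mvals_at L l)(diag l := mchk L (A @ [diag l]))"
    "A \<noteq> [] \<Longrightarrow> mvals_at L l (last A) < mchk L (A @ [diag l])"
    "\<And>C b C'. B = C @ b # C' \<Longrightarrow> mchk L (A @ C @ [b, diag l]) \<le> mvals_at L l b"
    using noisy_proc_step[of L l] by metis
  have e: "mstar_pair L (diag l) = mchk L (A @ [diag l])"
    using mstar_pair_diag[of L l] step(3) by simp
  have old: "mvals_at L l p = mstar_pair L p" if "p \<in> set (A @ B)" for p
    using mvals_at_eq_mstar that step(1) by metis
  show thesis
  proof (rule that[OF step(1,2) e])
    show "mstar_pair L (last A) < mstar_pair L (diag l)" if "A \<noteq> []"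
      using step(4)[OF that] old[of "last A"] that e by simp
    show "mchk L (A @ C @ [b, diag l]) \<le> mstar_pair L b" if "B = C @ b # C'" for C b C'
      using step(5)[OF that] old[of b] that by simp
  qed
qed

lemma sorted_collection_at:
  "sorted_wrt (\<lambda>a b. mstar_pair L a \<le> mstar_pair L b) (collection_at L l)"
proof (induction l)
  case (Suc l)
  obtain A B where AB: "collection_at L l = A @ B" "collection_at L (Suc l) = A @ diag l # B"
    "mstar_pair L (diag l) = mchk L (A @ [diag l])"
    "A \<noteq> [] \<Longrightarrow> mstar_pair L (last A) < mstar_pair L (diag l)"
    "\<And>C b C'. B = C @ b # C' \<Longrightarrow> mchk L (A @ C @ [b, diag l]) \<le> mstar_pair L b"
    using collection_at_Suc[of L l] by metis
  have sorted: "sorted_wrt (\<lambda>a b. mstar_pair L a \<le> mstar_pair L b) (A @ B)"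
    using Suc AB(1) by simp
  have "mstar_pair L a \<le> mstar_pair L (diag l)" if "a \<in> set A" for a
    using sorted_wrt_le_last[of "mstar_pair L" A a] sorted AB(4) that
    by (fastforce simp: sorted_wrt_append)
  moreover have "mstar_pair L (diag l) \<le> mstar_pair L b" if b: "b \<in> set B" for b
  proof -
    obtain C C' where "B = C @ b # C'"
      using split_list[OF b] by blast
    then show ?thesis
      using AB(3,5) mchk_append_mono[of L A "diag l" "C @ [b]"] by fastforce
  qed
  ultimately show ?case
    using sorted AB(2) by (auto simp: sorted_wrt_append)
qed (simp add: collection_at_def)

definition mchk_bounded :: "(nat \<Rightarrow> 'u set) \<Rightarrow> (nat \<times> nat \<Rightarrow> nat) \<Rightarrow> (nat \<times> nat) list \<Rightarrow> bool" where
  "mchk_bounded L f xs \<longleftrightarrow> (\<forall>ys y zs. xs = ys @ y # zs \<longrightarrow> mchk L (ys @ [y]) \<le> f y)"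

lemma mchk_bounded_insert:
  assumes "mchk_bounded L f (A @ B)" "mchk L (A @ [e]) \<le> f e"
    and "\<And>C b C'. B = C @ b # C' \<Longrightarrow> mchk L (A @ C @ [b, e]) \<le> f b"
  shows "mchk_bounded L f (A @ e # B)"
  unfolding mchk_bounded_def
proof (intro allI impI)
  fix ys y zs
  assume "A @ e # B = ys @ y # zs"
  from this[symmetric] show "mchk L (ys @ [y]) \<le> f y"
  proof (cases rule: append_Cons_eq_append_Cons_cases)
    case (left us)
    then have "A @ B = ys @ y # us @ B"
      by simp
    then show ?thesis
      using assms(1) unfolding mchk_bounded_def by blast
  next
    case middle
    then show ?thesis
      using assms(2) by simp
  next
    case (right us)
    then have "A @ B = (A @ us) @ y # zs"
      by simp
    then have "mchk L (A @ us @ [y]) \<le> f y"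
      using assms(1) unfolding mchk_bounded_def by fastforce
    moreover have "mchk L (A @ us @ [y, e]) \<le> f y"
      using assms(3) right(2) by simp
    ultimately show ?thesis
      using right(1) mchk_insert_le[of L A e us y] by simp
  qed
qed

lemma mchk_bounded_collection_at: "mchk_bounded L (mstar_pair L) (collection_at L l)"
proof (induction l)
  case (Suc l)
  obtain A B where "collection_at L l = A @ B" "collection_at L (Suc l) = A @ diag l # B"
    "mstar_pair L (diag l) = mchk L (A @ [diag l])"
    "\<And>C b C'. B = C @ b # C' \<Longrightarrow> mchk L (A @ C @ [b, diag l]) \<le> mstar_pair L b"
    using collection_at_Suc[of L l] by metis
  then show ?case
    using Suc mchk_bounded_insert[of L "mstar_pair L" A B "diag l"] by simp
qed (simp add: collection_at_def mchk_bounded_def)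

lemma mchk_witness_card_le_mstar:
  assumes "finite D" "D \<noteq> {}" "\<forall>p\<in>D. 1 \<le> snd p" "mchk_witness L T D"
  shows "\<exists>p\<in>D. card T \<le> mstar_pair L p"
proof -
  have "D \<subseteq> range diag"
    using assms(3) by (auto simp: range_diag)
  then obtain K where K: "finite K" "D = diag ` K"
    using finite_subset_image[OF assms(1)] by blast
  then obtain l where "K \<subseteq> {..<l}"
    using finite_nat_iff_bounded by auto
  then have sub: "D \<subseteq> set (collection_at L l)"
    using K(2) by (auto simp: set_collection_at)
  then have "\<exists>p\<in>set (collection_at L l). p \<in> D"
    using assms(2) by blast
  then obtain ys y zs where split: "collection_at L l = ys @ y # zs" "y \<in> D" "\<forall>z\<in>set zs. z \<notin> D"
    by (rule split_list_last_propE)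
  have "D \<subseteq> set (ys @ [y])"
    using sub split by auto
  then have "card T \<le> mchk L (ys @ [y])"
    using card_le_mchk_on[of "set (ys @ [y])" D y L T] assms(4) split(2) by (simp add: mchk_eq_mchk_on)
  also have "\<dots> \<le> mstar_pair L y"
    using mchk_bounded_collection_at[of L l] split(1) unfolding mchk_bounded_def by blast
  finally show ?thesis
    using split(2) by blast
qed

lemma mstar_maximal_witness:
  assumes "1 \<le> i" "0 < mstar L n i"
  obtains T D where "(n, i) \<in> D" "\<forall>p\<in>D. 1 \<le> snd p" "mchk_witness L T D" "card T = mstar L n i"
    "(\<Inter>p\<in>D. L (snd p)) \<subseteq> T" "\<forall>p\<in>D - {(n, i)}. mstar_pair L p < mstar L n i"
proof -
  obtain l where e: "diag l = (n, i)"
    using assms(1) range_diag by (metis mem_Collect_eq rangeE snd_conv)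
  obtain A B where AB: "collection_at L l = A @ B" "collection_at L (Suc l) = A @ diag l # B"
    "mstar_pair L (diag l) = mchk L (A @ [diag l])"
    "A \<noteq> [] \<Longrightarrow> mstar_pair L (last A) < mstar_pair L (diag l)"
    using collection_at_Suc[of L l] by metis
  have "0 < mchk_on L (set (A @ [diag l])) (diag l)"
    using AB(3) e assms(2) by (simp add: mchk_eq_mchk_on)
  then obtain T D where TD: "D \<subseteq> set (A @ [diag l])" "diag l \<in> D" "mchk_witness L T D"
    "card T = mchk_on L (set (A @ [diag l])) (diag l)" "(\<Inter>p\<in>D. L (snd p)) \<subseteq> T"
    by (metis finite_set mchk_on_maximal_witness)
  have "mstar_pair L a < mstar L n i" if a: "a \<in> set A" for a
  proof -
    have "sorted_wrt (\<lambda>a b. mstar_pair L a \<le> mstar_pair L b) A"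
      using sorted_collection_at[of L l] AB(1) by (simp add: sorted_wrt_append)
    then have "mstar_pair L a \<le> mstar_pair L (last A)"
      using a by (rule sorted_wrt_le_last)
    then show ?thesis
      using AB(4) a e by fastforce
  qed
  then have below: "\<forall>p\<in>D - {(n, i)}. mstar_pair L p < mstar L n i"
    using TD(1) e by auto
  have "D \<subseteq> set (collection_at L (Suc l))"
    using TD(1) AB(2) by auto
  moreover have "1 \<le> snd (diag k)" for k
    using range_diag by auto
  ultimately have "\<forall>p\<in>D. 1 \<le> snd p"
    by (auto simp: set_collection_at)
  moreover have "card T = mstar L n i"
    using TD(4) AB(3) e by (simp add: mchk_eq_mchk_on)
  ultimately show thesis
    using that TD(2,3,5) below e by simp
qed

section \<open>The generator\<close>

(* Since |S_t| >= 1 at every time t >= 1, time 0 promises the same as time 1; Pareto optimality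
   needs the smaller value when m* = 0. *)
definition gen_times :: "(nat \<Rightarrow> 'u set) \<Rightarrow> nat \<Rightarrow> nat \<Rightarrow> nat" where
  "gen_times L n i = (if mstar L n i = 0 then 0 else mstar L n i + 1)"

definition noise_count :: "'u set \<Rightarrow> 'u list \<Rightarrow> nat" where
  "noise_count K xs = length (filter (\<lambda>y. y \<notin> K) xs)"

definition active_pairs :: "(nat \<Rightarrow> 'u set) \<Rightarrow> 'u list \<Rightarrow> (nat \<times> nat) set" where
  "active_pairs L xs =
     {(n, j). 1 \<le> j \<and> noise_count (L j) xs \<le> n \<and> gen_times L n j \<le> card (set xs)}"

definition generator :: "(nat \<Rightarrow> 'u set) \<Rightarrow> 'u list \<Rightarrow> 'u" where
  "generator L xs = (SOME y. y \<notin> set xs \<and> (\<forall>p\<in>active_pairs L xs. y \<in> L (snd p)))"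

lemma card_diff_le_noise_count: "card (set xs - K) \<le> noise_count K xs"
proof -
  have "set xs - K = set (filter (\<lambda>y. y \<notin> K) xs)"
    by auto
  then show ?thesis
    unfolding noise_count_def by (metis card_length)
qed

lemma noise_count_prefix_le:
  assumes "enumeration K n x"
  shows "noise_count K (map x [0..<t]) \<le> n"
proof -
  have "noise_count K (map x [0..<t]) = card {k. k < t \<and> x k \<notin> K}"
    by (simp add: noise_count_def length_filter_conv_card cong: conj_cong)
  also have "\<dots> \<le> card {k. x k \<notin> K}"
    using assms by (intro card_mono) (auto simp: enumeration_def)
  also have "\<dots> \<le> n"
    using assms by (simp add: enumeration_def)
  finally show ?thesis .
qed

lemma generator_spec:
  fixes L :: "nat \<Rightarrow> 'u set"
  assumes "infinite (UNIV :: 'u set)" "\<And>t. finite {(n', j). j \<ge> 1 \<and> mstar L n' j + 1 \<le> t}"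
    and "xs \<noteq> []"
  shows "generator L xs \<notin> set xs \<and> (\<forall>p\<in>active_pairs L xs. generator L xs \<in> L (snd p))"
proof -
  have "\<exists>y. y \<notin> set xs \<and> (\<forall>p\<in>active_pairs L xs. y \<in> L (snd p))"
  proof (rule ccontr)
    assume "\<not> ?thesis"
    then have sub: "(\<Inter>p\<in>active_pairs L xs. L (snd p)) \<subseteq> set xs"
      by blast
    have "active_pairs L xs \<subseteq> {(n', j). j \<ge> 1 \<and> mstar L n' j + 1 \<le> card (set xs) + 1}"
      by (auto simp: active_pairs_def gen_times_def split: if_splits)
    then have "finite (active_pairs L xs)"
      using assms(2) by (rule finite_subset)
    moreover have "active_pairs L xs \<noteq> {}"
    proof
      assume "active_pairs L xs = {}"
      then have "UNIV \<subseteq> set xs"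
        using sub by simp
      then have "finite (UNIV :: 'u set)"
        by (rule rev_finite_subset[OF List.finite_set])
      then show False
        using assms(1) by simp
    qed
    moreover have "\<forall>p\<in>active_pairs L xs. 1 \<le> snd p"
      by (auto simp: active_pairs_def)
    moreover have "card (set xs - L (snd p)) \<le> fst p" if "p \<in> active_pairs L xs" for p
      using that card_diff_le_noise_count[of xs "L (snd p)"] by (auto simp: active_pairs_def)
    then have "mchk_witness L (set xs) (active_pairs L xs)"
      using rev_finite_subset[OF List.finite_set sub] by (simp add: mchk_witness_def)
    ultimately obtain p where p: "p \<in> active_pairs L xs" "card (set xs) \<le> mstar_pair L p"
      by (metis mchk_witness_card_le_mstar)
    moreover have "0 < card (set xs)"
      using assms(3) by (simp add: card_gt_0_iff)
    moreover have "gen_times L (fst p) (snd p) \<le> card (set xs)"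
      using p(1) by (auto simp: active_pairs_def)
    ultimately show False
      by (simp add: gen_times_def split: if_splits)
  qed
  then show ?thesis
    unfolding generator_def by (rule someI_ex)
qed

lemma generates_with_generator:
  fixes L :: "nat \<Rightarrow> 'u set"
  assumes "infinite (UNIV :: 'u set)" "\<And>t. finite {(n', j). j \<ge> 1 \<and> mstar L n' j + 1 \<le> t}"
  shows "generates_with L (generator L) (gen_times L)"
  unfolding generates_with_def gen_ok_def
proof (intro allI impI)
  fix n i x t
  assume i: "1 \<le> i" and enum: "enumeration (L i) n x" and t: "1 \<le> t"
    and time: "gen_times L n i \<le> card (x ` {..<t})"
  define xs where "xs = map x [0..<t]"
  have set: "set xs = x ` {..<t}"
    by (auto simp: xs_def atLeast0LessThan)
  have active: "(n, i) \<in> active_pairs L xs"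
    using i time noise_count_prefix_le[OF enum] set by (simp add: active_pairs_def xs_def)
  have "xs \<noteq> []"
    using t by (simp add: xs_def)
  then have spec: "generator L xs \<notin> set xs \<and> (\<forall>p\<in>active_pairs L xs. generator L xs \<in> L (snd p))"
    by (rule generator_spec[OF assms])
  then have "generator L xs \<in> L (snd (n, i))"
    using active by blast
  then show "generator L (map x [0..<t]) \<in> L i - x ` {..<t}"
    using spec set by (simp add: xs_def)
qed

section \<open>Pareto optimality\<close>

lemma gen_ok_mono: "gen_ok G K n k \<Longrightarrow> k \<le> k' \<Longrightarrow> gen_ok G K n k'"
  unfolding gen_ok_def by (meson order_trans)

lemma gen_ok_of_gen_time_le: "gen_time G L n i \<le> enat k \<Longrightarrow> gen_ok G (L i) n k"
proof -
  assume le: "gen_time G L n i \<le> enat k"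
  then have ex: "\<exists>k. gen_ok G (L i) n k"
    unfolding gen_time_def by (auto split: if_splits)
  then have "(LEAST k. gen_ok G (L i) n k) \<le> k"
    using le by (simp add: gen_time_def)
  moreover have "gen_ok G (L i) n (LEAST k. gen_ok G (L i) n k)"
    using ex by (rule LeastI_ex)
  ultimately show ?thesis
    using gen_ok_mono by blast
qed

lemma gen_ok_prefix:
  assumes "countable K" "K \<noteq> {}" "distinct xs" "xs \<noteq> []" "card (set xs - K) \<le> a"
    and "gen_ok G K a (card (set xs))"
  shows "G xs \<in> K - set xs"
proof -
  define x where "x t = (if t < length xs then xs ! t else from_nat_into K (t - length xs))" for t
  have "K \<subseteq> range x"
  proof
    fix y
    assume "y \<in> K"
    then obtain k where "y = from_nat_into K k"
      using assms(1,2) by (metis range_from_nat_into rangeE)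
    then show "y \<in> range x"
      by (metis add_diff_cancel_left' not_add_less1 rangeI x_def)
  qed
  moreover have "{t. x t \<notin> K} = {t. t < length xs \<and> xs ! t \<notin> K}"
    using from_nat_into[OF assms(2)] by (auto simp: x_def)
  moreover have "card {t. t < length xs \<and> xs ! t \<notin> K} = card (set xs - K)"
  proof -
    have "card {t. t < length xs \<and> xs ! t \<notin> K} = length (filter (\<lambda>y. y \<notin> K) xs)"
      by (simp add: length_filter_conv_card)
    also have "\<dots> = card (set (filter (\<lambda>y. y \<notin> K) xs))"
      using assms(3) by (metis distinct_card distinct_filter)
    also have "set (filter (\<lambda>y. y \<notin> K) xs) = set xs - K"
      by auto
    finally show ?thesis .
  qed
  ultimately have "enumeration K a x"
    using assms(5) by (simp add: enumeration_def)
  moreover have "map x [0..<length xs] = xs"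
    by (rule nth_equalityI) (auto simp: x_def)
  moreover have "x ` {..<length xs} = set xs"
    by (auto simp: x_def in_set_conv_nth)
  ultimately show ?thesis
    using assms(4,6) unfolding gen_ok_def by (metis One_nat_def Suc_leI length_greater_0_conv order_refl)
qed

lemma pareto_optimal_gen_times:
  fixes L :: "nat \<Rightarrow> 'u set"
  assumes "countable (UNIV :: 'u set)" "\<And>i. i \<ge> 1 \<Longrightarrow> infinite (L i)"
  shows "pareto_optimal L (gen_times L)"
  unfolding pareto_optimal_def
proof (intro allI impI)
  fix G :: "'u list \<Rightarrow> 'u" and n i
  assume "noisy_generates L G \<and> i \<ge> 1 \<and> gen_time G L n i < enat (gen_times L n i)"
  then have i: "1 \<le> i" and faster: "gen_time G L n i < enat (gen_times L n i)"
    by auto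
  show "\<exists>n' j. j \<ge> 1 \<and> (n', j) \<noteq> (n, i) \<and> gen_time G L n' j > enat (gen_times L n' j)"
  proof (rule ccontr)
    assume "\<not> ?thesis"
    then have others: "gen_ok G (L (snd p)) (fst p) (gen_times L (fst p) (snd p))"
      if "1 \<le> snd p" "p \<noteq> (n, i)" for p
      using that by (metis gen_ok_of_gen_time_le not_le_imp_less prod.collapse)
    have pos: "0 < mstar L n i"
      using faster by (auto simp: gen_times_def enat_0 split: if_splits)
    then have "gen_time G L n i \<le> enat (mstar L n i)"
      using faster by (cases "gen_time G L n i") (auto simp: gen_times_def)
    then have own: "gen_ok G (L i) n (mstar L n i)"
      by (rule gen_ok_of_gen_time_le)
    obtain T D where TD: "(n, i) \<in> D" "\<forall>p\<in>D. 1 \<le> snd p" "mchk_witness L T D"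
      "card T = mstar L n i" "(\<Inter>p\<in>D. L (snd p)) \<subseteq> T"
      "\<forall>p\<in>D - {(n, i)}. mstar_pair L p < mstar L n i"
      using mstar_maximal_witness[OF i pos] by metis
    obtain xs where xs: "set xs = T" "distinct xs"
      using TD(3) finite_distinct_list by (auto simp: mchk_witness_def)
    have "xs \<noteq> []"
      using xs(1) TD(4) pos by auto
    have "G xs \<in> L (snd p) - T" if p: "p \<in> D" for p
    proof -
      have "gen_ok G (L (snd p)) (fst p) (card T)"
      proof (cases "p = (n, i)")
        case True
        then show ?thesis
          using own TD(4) by simp
      next
        case False
        then have "mstar_pair L p < card T"
          using TD(4,6) p by simp
        then have "gen_times L (fst p) (snd p) \<le> card T"
          by (simp add: gen_times_def)
        then show ?thesis
          using others TD(2) p False gen_ok_mono by blast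
      qed
      moreover have "countable (L (snd p))"
        using assms(1) by (rule countable_subset[OF subset_UNIV])
      moreover have "L (snd p) \<noteq> {}"
        using assms(2) TD(2) p by fastforce
      moreover have "card (set xs - L (snd p)) \<le> fst p"
        using TD(3) p xs(1) by (simp add: mchk_witness_def)
      ultimately show ?thesis
        using gen_ok_prefix[OF _ _ xs(2) \<open>xs \<noteq> []\<close>] xs(1) by simp
    qed
    then show False
      using TD(1,5) by blast
  qed
qed

theorem mainTheorem7:
  fixes L :: "nat \<Rightarrow> 'u set"
  assumes "countable (UNIV :: 'u set)" and "infinite (UNIV :: 'u set)"
    and "\<And>i. i \<ge> 1 \<Longrightarrow> infinite (L i)"
    and "\<And>t. finite {(n', j). j \<ge> 1 \<and> mstar L n' j + 1 \<le> t}"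
  shows "\<exists>(G :: 'u list \<Rightarrow> 'u) tm. generates_with L G tm \<and> pareto_optimal L tm"
  using generates_with_generator[OF assms(2,4)] pareto_optimal_gen_times[where L = L, OF assms(1,3)] by blast

end
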